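(* Let $v=v_0v_1\cdots$ be an aperiodic infinite word over $\{0,1\}$ with $h(\ell)$ the number of $1$'s among its first $\ell$ digits, and suppose $\liminf_{\ell\to\infty}h(\ell)/\ell>\ln2/\ln3$. Then the set $\{\Phi_{\mathbb{R}}(v_kv_{k+1}\cdots):k\ge0\}$ (the orbit of $\Phi_{\mathbb{R}}(v)$) is an infinite subset of $\mathbb{R}$ having at least one accumulation point in $\mathbb{R}$.
   Context: For an infinite $0$-$1$ word $w$ with $1$'s at positions $d_0<d_1<\cdots$, $\Phi_{\mathbb{R}}(w)$ is the real sum $-\sum_{i\ge0}2^{d_i}/3^{i+1}$, said to exist if the series converges (under the hypothesis, all $\Phi_{\mathbb{R}}(v_kv_{k+1}\cdots)$ exist). Aperiodic means not eventually periodic. *)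

theory Defs
  imports "HOL-Analysis.Analysis" "HOL-Library.Infinite_Set"
begin

text \<open>Infinite 0-1 words are modelled as functions nat => bool (True = digit 1).\<close>

definition ones_count :: "(nat \<Rightarrow> bool) \<Rightarrow> nat \<Rightarrow> nat" where
  "ones_count w l = card {j. j < l \<and> w j}"

definition shift_word :: "nat \<Rightarrow> (nat \<Rightarrow> bool) \<Rightarrow> (nat \<Rightarrow> bool)" where
  "shift_word k w = (\<lambda>n. w (k + n))"

definition eventually_periodic :: "(nat \<Rightarrow> bool) \<Rightarrow> bool" where
  "eventually_periodic w \<longleftrightarrow> (\<exists>p>0. \<exists>N. \<forall>n\<ge>N. w (n + p) = w n)"

text \<open>Positions of the 1's, d_0 < d_1 < ... (meaningful when there are infinitely many 1's).\<close>
definition one_pos :: "(nat \<Rightarrow> bool) \<Rightarrow> nat \<Rightarrow> nat" where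
  "one_pos w i = enumerate {n. w n} i"

definition Phi_term :: "(nat \<Rightarrow> bool) \<Rightarrow> nat \<Rightarrow> real" where
  "Phi_term w i = - (2 ^ one_pos w i / 3 ^ (i + 1))"

definition Phi_exists :: "(nat \<Rightarrow> bool) \<Rightarrow> bool" where
  "Phi_exists w \<longleftrightarrow> infinite {n. w n} \<and> summable (Phi_term w)"

definition Phi_R :: "(nat \<Rightarrow> bool) \<Rightarrow> real" where
  "Phi_R w = (\<Sum>i. Phi_term w i)"

end

theory Submission
  imports Defs
begin

(* Write x k for Phi_R of the k-th shift of v. Splitting off the first digit gives
   x (k+1) = (3 x k + 1)/2 if v k = 1 and x (k+1) = x k / 2 otherwise, so x is an orbit of the
   Collatz map in which v records the branch taken at each step.
   Since the density of ones exceeds log 2 / log 3, a rising-sun argument yields c > log 2 / log 3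
   and infinitely many k such that every prefix of the k-th shift has density at least c; for
   these shifts the terms of Phi are dominated by a geometric series of ratio 2 powr (1/c) / 3 < 1,
   so all x k exist and are uniformly bounded.
   If these x k took only finitely many values, some value would be taken infinitely often. Such
   a value is a rational with odd denominator, hence so is every x k, and then v k is the parity
   of the numerator of x k: the orbit is deterministic and v is eventually periodic. So the
   bounded set of values is infinite and has an accumulation point. *)

lemma Least_image_strict_mono:
  fixes g :: "nat \<Rightarrow> nat"
  assumes "strict_mono g" "A \<noteq> {}"
  shows "(LEAST y. y \<in> g ` A) = g (LEAST x. x \<in> A)"
proof (rule Least_equality)
  show "g (LEAST x. x \<in> A) \<in> g ` A"
    using assms(2) by (auto intro: LeastI)
  show "g (LEAST x. x \<in> A) \<le> y" if "y \<in> g ` A" for y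
    using that assms(1) by (auto simp: strict_mono_less_eq intro: Least_le)
qed

lemma enumerate_image_strict_mono:
  fixes g :: "nat \<Rightarrow> nat"
  assumes "strict_mono g" "infinite A"
  shows "enumerate (g ` A) n = g (enumerate A n)"
  using assms(2)
proof (induction n arbitrary: A)
  case 0
  then show ?case
    using Least_image_strict_mono[OF assms(1) infinite_imp_nonempty] by (simp add: enumerate_0)
next
  case (Suc n)
  have "g ` A - {LEAST y. y \<in> g ` A} = g ` A - g ` {LEAST x. x \<in> A}"
    using Least_image_strict_mono[OF assms(1) infinite_imp_nonempty[OF Suc.prems]] by simp
  also have "\<dots> = g ` (A - {LEAST x. x \<in> A})"
    using strict_mono_imp_inj_on[OF assms(1)] by (rule image_set_diff[symmetric])
  finally show ?case
    using Suc.IH[of "A - {LEAST x. x \<in> A}"] Suc.prems by (simp add: enumerate_Suc)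
qed

lemma shift_word_shift_word: "shift_word j (shift_word k w) = shift_word (k + j) w"
  by (simp add: shift_word_def add.assoc)

lemma finite_ones_shift_word_iff:
  "finite {n. shift_word k w n} \<longleftrightarrow> finite {n. w n}"
proof -
  have "(+) k ` {n. shift_word k w n} = {n. w n} \<inter> {k..}"
    by (auto simp: shift_word_def image_iff dest: le_Suc_ex)
  moreover have "finite ((+) k ` {n. shift_word k w n}) \<longleftrightarrow> finite {n. shift_word k w n}"
    by (rule finite_image_iff) simp
  moreover have "finite ({n. w n} \<inter> {k..}) \<longleftrightarrow> finite {n. w n}"
  proof
    assume "finite ({n. w n} \<inter> {k..})"
    then have "finite ({n. w n} \<inter> {k..} \<union> {..<k})"
      by simp
    moreover have "{n. w n} \<subseteq> {n. w n} \<inter> {k..} \<union> {..<k}"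
      by auto
    ultimately show "finite {n. w n}"
      by (rule finite_subset[rotated])
  qed simp
  ultimately show ?thesis
    by simp
qed

lemma ones_Diff_zero_shift_word_one: "{n. w n} - {0} = Suc ` {n. shift_word 1 w n}"
  by (auto simp: shift_word_def image_iff) (metis not0_implies_Suc)

lemma one_pos_if_head_zero:
  assumes "infinite {n. w n}" "\<not> w 0"
  shows "one_pos w i = Suc (one_pos (shift_word 1 w) i)"
proof -
  have "{n. w n} = Suc ` {n. shift_word 1 w n}"
    using ones_Diff_zero_shift_word_one[of w] assms(2) by auto
  then show ?thesis
    using assms(1) finite_ones_shift_word_iff[of 1 w]
    by (simp add: one_pos_def enumerate_image_strict_mono strict_mono_Suc_iff)
qed

lemma one_pos_if_head_one:
  assumes "infinite {n. w n}" "w 0"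
  shows "one_pos w 0 = 0" "one_pos w (Suc i) = Suc (one_pos (shift_word 1 w) i)"
proof -
  show first: "one_pos w 0 = 0"
    using assms(2) by (simp add: one_pos_def enumerate_0)
  have "enumerate {n. w n} (Suc i) = enumerate (Suc ` {n. shift_word 1 w n}) i"
    using first ones_Diff_zero_shift_word_one[of w] by (simp add: one_pos_def enumerate_Suc')
  then show "one_pos w (Suc i) = Suc (one_pos (shift_word 1 w) i)"
    using assms(1) finite_ones_shift_word_iff[of 1 w]
    by (simp add: one_pos_def enumerate_image_strict_mono strict_mono_Suc_iff)
qed

lemma Phi_term_if_head_zero:
  assumes "infinite {n. w n}" "\<not> w 0"
  shows "Phi_term w = (\<lambda>i. 2 * Phi_term (shift_word 1 w) i)"
  using one_pos_if_head_zero[OF assms] by (simp add: Phi_term_def fun_eq_iff)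

lemma Phi_term_if_head_one:
  assumes "infinite {n. w n}" "w 0"
  shows "Phi_term w 0 = - 1/3" "(\<lambda>i. Phi_term w (Suc i)) = (\<lambda>i. 2/3 * Phi_term (shift_word 1 w) i)"
  using one_pos_if_head_one[OF assms] by (simp_all add: Phi_term_def fun_eq_iff)

lemma summable_Phi_term_shift_word_one_iff:
  assumes "infinite {n. w n}"
  shows "summable (Phi_term (shift_word 1 w)) \<longleftrightarrow> summable (Phi_term w)"
proof (cases "w 0")
  case True
  then show ?thesis
    using Phi_term_if_head_one(2)[OF assms True] summable_Suc_iff[of "Phi_term w"]
    by (simp add: summable_cmult_iff)
next
  case False
  then show ?thesis
    using Phi_term_if_head_zero[OF assms False] by (simp add: summable_cmult_iff)
qed

lemma Phi_R_shift_word_one: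
  assumes "infinite {n. w n}" "summable (Phi_term (shift_word 1 w))"
  shows "Phi_R (shift_word 1 w) = (if w 0 then (3 * Phi_R w + 1) / 2 else Phi_R w / 2)"
proof (cases "w 0")
  case True
  have "summable (Phi_term w)"
    using assms summable_Phi_term_shift_word_one_iff by blast
  then have "Phi_R w = Phi_term w 0 + (\<Sum>i. Phi_term w (Suc i))"
    unfolding Phi_R_def by (simp add: suminf_split_head)
  also have "\<dots> = - 1/3 + (\<Sum>i. 2/3 * Phi_term (shift_word 1 w) i)"
    by (simp only: Phi_term_if_head_one[OF assms(1) True])
  also have "\<dots> = - 1/3 + 2/3 * Phi_R (shift_word 1 w)"
    unfolding Phi_R_def by (simp only: suminf_mult[OF assms(2)])
  finally show ?thesis
    using True by simp
next
  case False
  then show ?thesis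
    using Phi_term_if_head_zero[OF assms(1) False] suminf_mult[OF assms(2)]
    by (simp add: Phi_R_def)
qed

lemma summable_Phi_term_shift_word_le:
  assumes "infinite {n. v n}" "summable (Phi_term (shift_word k' v))" "k \<le> k'"
  shows "summable (Phi_term (shift_word k v))"
  using assms(3,2)
proof (induction k rule: inc_induct)
  case (step k)
  then show ?case
    using summable_Phi_term_shift_word_one_iff[of "shift_word k v"] assms(1)
    by (simp add: shift_word_shift_word finite_ones_shift_word_iff)
qed

lemma ones_count_0 [simp]: "ones_count w 0 = 0"
  by (simp add: ones_count_def)

lemma ones_count_Suc: "ones_count w (Suc l) = ones_count w l + (if w l then 1 else 0)"
proof -
  have "{j. j < Suc l \<and> w j} = {j. j < l \<and> w j} \<union> (if w l then {l} else {})"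
    by (auto simp: less_Suc_eq)
  then show ?thesis unfolding ones_count_def by (auto simp: card_insert_if)
qed

lemma ones_count_shift_word: "ones_count w k + ones_count (shift_word k w) l = ones_count w (k + l)"
  by (induction l) (auto simp: ones_count_Suc shift_word_def)

lemma ones_count_Suc_one_pos:
  assumes "infinite {n. w n}"
  shows "ones_count w (Suc (one_pos w i)) = Suc i"
proof -
  let ?S = "{n. w n}"
  have "{j. j < Suc (enumerate ?S i) \<and> w j} = enumerate ?S ` {..i}"
  proof (intro equalityI subsetI)
    fix j
    assume j: "j \<in> {j. j < Suc (enumerate ?S i) \<and> w j}"
    then obtain m where "enumerate ?S m = j"
      using enumerate_Ex[OF assms] by blast
    moreover have "enumerate ?S m \<le> enumerate ?S i"
      using j \<open>enumerate ?S m = j\<close> by simp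
    then have "m \<le> i"
      using assms by simp
    ultimately show "j \<in> enumerate ?S ` {..i}"
      by blast
  next
    fix j
    assume "j \<in> enumerate ?S ` {..i}"
    then obtain m where "m \<le> i" "j = enumerate ?S m"
      by blast
    moreover have "enumerate ?S m \<le> enumerate ?S i"
      using \<open>m \<le> i\<close> assms by simp
    ultimately show "j \<in> {j. j < Suc (enumerate ?S i) \<and> w j}"
      using enumerate_in_set[OF assms] by simp
  qed
  moreover have "inj (enumerate ?S)"
    using inj_enumerate[OF assms] .
  ultimately show ?thesis
    unfolding ones_count_def one_pos_def by (simp add: card_image inj_on_subset)
qed

definition dense_prefixes :: "real \<Rightarrow> (nat \<Rightarrow> bool) \<Rightarrow> bool" where
  "dense_prefixes c w \<longleftrightarrow> (\<forall>l. c * real l \<le> real (ones_count w l))"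

lemma infinite_ones_if_dense_prefixes:
  assumes "0 < c" "dense_prefixes c w"
  shows "infinite {n. w n}"
proof
  assume fin: "finite {n. w n}"
  obtain l :: nat where l: "real (card {n. w n}) / c < l"
    using reals_Archimedean2 by blast
  have "ones_count w l \<le> card {n. w n}"
    unfolding ones_count_def using fin by (intro card_mono) auto
  moreover have "c * real l \<le> real (ones_count w l)"
    using assms(2) by (simp add: dense_prefixes_def)
  ultimately show False
    using l assms(1) by (simp add: divide_less_eq mult.commute)
qed

lemma one_pos_le_if_dense_prefixes:
  assumes "0 < c" "dense_prefixes c w"
  shows "c * real (one_pos w i) \<le> real (Suc i)"
proof -
  have "c * real (Suc (one_pos w i)) \<le> real (Suc i)"
    using assms(2) ones_count_Suc_one_pos[OF infinite_ones_if_dense_prefixes[OF assms]]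
    unfolding dense_prefixes_def by (metis of_nat_Suc)
  moreover have "c * real (one_pos w i) \<le> c * real (Suc (one_pos w i))"
    using assms(1) by simp
  ultimately show ?thesis by linarith
qed

lemma two_powr_inverse_lt_three:
  fixes c :: real
  assumes "ln 2 / ln 3 < c"
  shows "0 < c" "2 powr (1/c) < 3"
proof -
  have "0 < ln 2 / ln (3::real)"
    by simp
  then show "0 < c"
    using assms by linarith
  then have "ln 2 / c < ln 3"
    using assms by (simp add: divide_less_eq mult.commute)
  have "2 powr (1/c) = exp (ln 2 / c)"
    by (simp add: powr_def)
  also have "\<dots> < exp (ln 3)"
    using \<open>ln 2 / c < ln 3\<close> by (simp only: exp_less_cancel_iff)
  finally show "2 powr (1/c) < 3"
    by simp
qed

lemma abs_Phi_term_le_if_dense_prefixes: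
  assumes "0 < c" "dense_prefixes c w"
  shows "\<bar>Phi_term w i\<bar> \<le> (2 powr (1/c) / 3) ^ Suc i"
proof -
  have "(2::real) ^ one_pos w i = 2 powr real (one_pos w i)"
    by (simp add: powr_realpow)
  also have "\<dots> \<le> 2 powr (real (Suc i) / c)"
    using one_pos_le_if_dense_prefixes[OF assms] assms(1)
    by (intro powr_mono) (simp_all add: le_divide_eq mult.commute)
  also have "\<dots> = (2 powr (1/c)) powr real (Suc i)"
    by (simp add: powr_powr)
  also have "\<dots> = (2 powr (1/c)) ^ Suc i"
    by (rule powr_realpow) simp
  finally have "(2::real) ^ one_pos w i / 3 ^ Suc i \<le> (2 powr (1/c)) ^ Suc i / 3 ^ Suc i"
    by (rule divide_right_mono) simp
  then show ?thesis
    by (simp add: Phi_term_def power_divide)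
qed

lemma Phi_R_bound_if_dense_prefixes:
  assumes "ln 2 / ln 3 < c" "dense_prefixes c w"
  defines "r \<equiv> 2 powr (1/c) / 3"
  shows "summable (Phi_term w)" "\<bar>Phi_R w\<bar> \<le> r / (1 - r)"
proof -
  have c: "0 < c" and r: "0 < r" "r < 1"
    using two_powr_inverse_lt_three[OF assms(1)] by (auto simp: r_def)
  have bound: "\<bar>Phi_term w i\<bar> \<le> r ^ Suc i" for i
    using abs_Phi_term_le_if_dense_prefixes[OF c assms(2)] by (simp add: r_def)
  have "(\<lambda>i. r * r ^ i) sums (r * (1 / (1 - r)))"
    using r by (intro sums_mult geometric_sums) simp
  then have geom: "(\<lambda>i. r ^ Suc i) sums (r / (1 - r))"
    by simp
  have abs_summable: "summable (\<lambda>i. \<bar>Phi_term w i\<bar>)"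
    using bound by (intro summable_comparison_test'[OF sums_summable[OF geom], where N = 0]) simp
  then show "summable (Phi_term w)"
    by (rule summable_rabs_cancel)
  have "\<bar>Phi_R w\<bar> \<le> (\<Sum>i. \<bar>Phi_term w i\<bar>)"
    unfolding Phi_R_def by (rule summable_rabs[OF abs_summable])
  also have "\<dots> \<le> (\<Sum>i. r ^ Suc i)"
    by (rule suminf_le[OF bound abs_summable sums_summable[OF geom]])
  finally show "\<bar>Phi_R w\<bar> \<le> r / (1 - r)"
    using sums_unique[OF geom] by simp
qed

lemma filterlim_at_top_imp_ex_suffix_min:
  fixes f :: "nat \<Rightarrow> real"
  assumes "filterlim f at_top sequentially"
  shows "\<exists>k\<ge>N. \<forall>m\<ge>k. f k \<le> f m"
proof -
  have "\<forall>\<^sub>F m in sequentially. f N \<le> f m"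
    using assms by (simp add: filterlim_at_top)
  then obtain M where M: "\<And>m. m \<ge> M \<Longrightarrow> f N \<le> f m"
    unfolding eventually_sequentially by blast
  obtain k where "is_arg_min f (\<lambda>m. m \<in> {N..N + M}) k"
    using ex_is_arg_min_if_finite[of "{N..N + M}" f] by auto
  then have k: "k \<in> {N..N + M}" "\<And>m. m \<in> {N..N + M} \<Longrightarrow> f k \<le> f m"
    by (auto simp: is_arg_min_linorder)
  have "f k \<le> f m" if "m \<ge> k" for m
  proof (cases "m \<le> N + M")
    case True
    then show ?thesis using k that by auto
  next
    case False
    then show ?thesis using k(2)[of N] M[of m] by auto
  qed
  then show ?thesis using k(1) by auto
qed

lemma frequently_dense_prefixes_shift_word:
  assumes "filterlim (\<lambda>l. real (ones_count v l) - c * real l) at_top sequentially"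
  shows "\<exists>k\<ge>N. dense_prefixes c (shift_word k v)"
proof -
  (* Rising sun: past a point k where the excess of ones attains its minimum over all later
     positions, every prefix of the shifted word has density at least c. *)
  obtain k where "k \<ge> N" and k: "\<And>m. m \<ge> k \<Longrightarrow>
      real (ones_count v k) - c * real k \<le> real (ones_count v m) - c * real m"
    using filterlim_at_top_imp_ex_suffix_min[OF assms] by blast
  have "c * real l \<le> real (ones_count (shift_word k v) l)" for l
    using k[of "k + l"] ones_count_shift_word[of v k l] by (simp add: algebra_simps)
  then show ?thesis
    using \<open>k \<ge> N\<close> by (auto simp: dense_prefixes_def)
qed

lemma ex_dense_prefixes_shift_word:
  assumes "ereal a < liminf (\<lambda>l. ereal (real (ones_count v l) / real l))"
  obtains c where "a < c" "\<And>N. \<exists>k\<ge>N. dense_prefixes c (shift_word k v)"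
proof -
  obtain c1 where c1: "a < c1" "ereal c1 < liminf (\<lambda>l. ereal (real (ones_count v l) / real l))"
    using ereal_dense2[OF assms] by auto
  define c where "c = (a + c1) / 2"
  have "\<forall>\<^sub>F l in sequentially. c1 < real (ones_count v l) / real l"
    using less_LiminfD[OF c1(2)] by simp
  then have "\<forall>\<^sub>F l in sequentially. (c1 - c) * real l \<le> real (ones_count v l) - c * real l"
    using eventually_gt_at_top[of 0]
    by eventually_elim (simp add: field_simps less_divide_eq)
  moreover have "filterlim (\<lambda>l. (c1 - c) * real l) at_top sequentially"
    using c1(1) by (intro filterlim_tendsto_pos_mult_at_top[OF tendsto_const _ filterlim_real_sequentially])
      (simp add: c_def)
  ultimately have "filterlim (\<lambda>l. real (ones_count v l) - c * real l) at_top sequentially"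
    by (rule filterlim_at_top_mono[rotated])
  moreover have "a < c"
    using c1(1) by (simp add: c_def)
  ultimately show ?thesis
    using that frequently_dense_prefixes_shift_word by blast
qed

definition collatz_orbit :: "(nat \<Rightarrow> bool) \<Rightarrow> (nat \<Rightarrow> real) \<Rightarrow> bool" where
  "collatz_orbit b x \<longleftrightarrow> (\<forall>m. x (Suc m) = (if b m then (3 * x m + 1) / 2 else x m / 2))"

definition odd_denom_rats :: "real set" where
  "odd_denom_rats = {of_int N / of_int D | N D. odd D}"

definition odd_numerator :: "real \<Rightarrow> bool" where
  "odd_numerator y \<longleftrightarrow> (\<exists>N D. odd D \<and> odd N \<and> y = of_int N / of_int D)"

lemma collatz_orbitD:
  "collatz_orbit b x \<Longrightarrow> x (Suc m) = (if b m then (3 * x m + 1) / 2 else x m / 2)"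
  by (simp add: collatz_orbit_def)

lemma in_odd_denom_ratsI: "odd D \<Longrightarrow> of_int N / of_int D \<in> odd_denom_rats"
  by (auto simp: odd_denom_rats_def)

lemma odd_numerator_iff:
  assumes "odd D"
  shows "odd_numerator (of_int N / of_int D) \<longleftrightarrow> odd N"
proof
  assume "odd_numerator (of_int N / of_int D)"
  then obtain N' D' where ND': "odd D'" "odd N'" "of_int N / of_int D = (of_int N' / of_int D' :: real)"
    unfolding odd_numerator_def by blast
  moreover have "real_of_int D \<noteq> 0" "real_of_int D' \<noteq> 0"
    using assms ND'(1) by auto
  ultimately have "real_of_int (N * D') = real_of_int (N' * D)"
    by (simp add: field_simps)
  then have "N * D' = N' * D"
    by (simp only: of_int_eq_iff)
  then show "odd N"
    using assms ND'(1,2) by (metis even_mult_iff)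
qed (use assms in \<open>auto simp: odd_numerator_def\<close>)

lemma collatz_orbit_window:
  assumes "collatz_orbit b x"
  shows "\<exists>H (B::int). 3 ^ H * x m = 2 ^ n * x (m + n) + B"
proof (induction n arbitrary: m)
  case 0
  show ?case by (intro exI[of _ 0]) simp
next
  case (Suc n)
  obtain H and B :: int where HB: "3 ^ H * x (Suc m) = 2 ^ n * x (Suc m + n) + B"
    using Suc.IH by blast
  have step: "x (Suc m) = (if b m then (3 * x m + 1) / 2 else x m / 2)"
    using assms by (rule collatz_orbitD)
  show ?case
  proof (cases "b m")
    case True
    then have "3 ^ Suc H * x m = 2 ^ Suc n * x (m + Suc n) + (2 * B - 3 ^ H)"
      using HB step by (simp add: algebra_simps)
    then show ?thesis by blast
  next
    case False
    then have "3 ^ H * x m = 2 ^ Suc n * x (m + Suc n) + 2 * B"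
      using HB step by (simp add: algebra_simps)
    then show ?thesis by blast
  qed
qed

lemma collatz_orbit_odd_denom_rats_backward:
  assumes "collatz_orbit b x" "x k \<in> odd_denom_rats" "m \<le> k"
  shows "x m \<in> odd_denom_rats"
  using assms(3,2)
proof (induction m rule: inc_induct)
  case (step m)
  then obtain N D where ND: "odd D" "x (Suc m) = of_int N / of_int D"
    by (auto simp: odd_denom_rats_def)
  have "real_of_int D \<noteq> 0"
    using ND(1) by auto
  have "x m = (if b m then (2 * x (Suc m) - 1) / 3 else 2 * x (Suc m))"
    using collatz_orbitD[OF assms(1), of m] by (auto simp: field_simps)
  then have "x m = (if b m then of_int (2 * N - D) / of_int (3 * D) else of_int (2 * N) / of_int D)"
    using ND \<open>real_of_int D \<noteq> 0\<close> by (auto simp: field_simps)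
  then show ?case
    using in_odd_denom_ratsI[of "3 * D" "2 * N - D"] in_odd_denom_ratsI[of D "2 * N"] ND(1)
    by (cases "b m") simp_all
qed

lemma collatz_orbit_parity:
  assumes "collatz_orbit b x" "x m \<in> odd_denom_rats" "x (Suc m) \<in> odd_denom_rats"
  shows "b m \<longleftrightarrow> odd_numerator (x m)"
proof -
  obtain N D N' D' where ND: "odd D" "x m = of_int N / of_int D"
    and ND': "odd D'" "x (Suc m) = of_int N' / of_int D'"
    using assms(2,3) by (auto simp: odd_denom_rats_def)
  have "of_int N' / of_int D' =
      (if b m then (3 * (of_int N / of_int D) + 1) / 2 else of_int N / of_int D / (2::real))"
    using collatz_orbitD[OF assms(1), of m] ND ND' by simp
  moreover have "real_of_int D \<noteq> 0" "real_of_int D' \<noteq> 0"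
    using ND(1) ND'(1) by auto
  ultimately have "real_of_int (if b m then (3 * N + D) * D' else N * D') = real_of_int (2 * N' * D)"
    by (cases "b m") (simp_all add: field_simps)
  then have eq: "(if b m then (3 * N + D) * D' else N * D') = 2 * N' * D"
    by (simp only: of_int_eq_iff)
  have "b m \<longleftrightarrow> odd N"
  proof (cases "b m")
    case True
    then have "even ((3 * N + D) * D')"
      using eq by simp
    then have "even (3 * N + D)"
      using ND'(1) by simp
    then show ?thesis
      using True ND(1) by presburger
  next
    case False
    then have "even (N * D')"
      using eq by simp
    then show ?thesis
      using False ND'(1) by simp
  qed
  then show ?thesis
    using odd_numerator_iff[OF ND(1), of N] ND(2) by simp
qed

lemma collatz_orbit_repeated_value_in_odd_denom_rats:
  assumes "collatz_orbit b x" "k1 < k2" "x k1 = x k2"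
  shows "x k1 \<in> odd_denom_rats"
proof -
  obtain H and B :: int where "3 ^ H * x k1 = 2 ^ (k2 - k1) * x (k1 + (k2 - k1)) + B"
    using collatz_orbit_window[OF assms(1)] by blast
  then have "3 ^ H * x k1 = 2 ^ (k2 - k1) * x k1 + B"
    using assms(2,3) by simp
  moreover have odd: "odd (3 ^ H - 2 ^ (k2 - k1) :: int)"
    using assms(2) by simp
  then have "real_of_int (3 ^ H - 2 ^ (k2 - k1)) \<noteq> 0"
    by (metis even_zero of_int_eq_0_iff)
  ultimately have "x k1 = of_int B / of_int (3 ^ H - 2 ^ (k2 - k1))"
    by (simp add: field_simps)
  then show ?thesis
    using in_odd_denom_ratsI[OF odd] by simp
qed

lemma collatz_orbit_shift_eq_if_odd_denom_rats:
  assumes "collatz_orbit b x" "\<And>m. x m \<in> odd_denom_rats" "x k1 = x k2"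
  shows "b (k1 + t) = b (k2 + t)"
proof -
  have b: "b m \<longleftrightarrow> odd_numerator (x m)" for m
    using collatz_orbit_parity[OF assms(1) assms(2) assms(2)] .
  have "x (k1 + t) = x (k2 + t)"
  proof (induction t)
    case (Suc t)
    then show ?case
      using collatz_orbitD[OF assms(1), of "k1 + t"] collatz_orbitD[OF assms(1), of "k2 + t"] b
      by simp
  qed (use assms(3) in simp)
  then show ?thesis
    using b by simp
qed

lemma collatz_orbit_eventually_periodic:
  assumes orbit: "collatz_orbit b x"
    and "infinite K" and K: "\<And>k. k \<in> K \<Longrightarrow> x k = s"
  shows "eventually_periodic b"
proof -
  obtain k1 where "k1 \<in> K"
    using infinite_imp_nonempty[OF \<open>infinite K\<close>] by blast
  moreover obtain k2 where "k2 \<in> K" "k1 < k2"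
    using \<open>infinite K\<close> unfolding infinite_nat_iff_unbounded by blast
  ultimately have "s \<in> odd_denom_rats"
    using collatz_orbit_repeated_value_in_odd_denom_rats[OF orbit, of k1 k2] K by simp
  have rats: "x m \<in> odd_denom_rats" for m
  proof -
    obtain k where "k \<in> K" "m \<le> k"
      using \<open>infinite K\<close> unfolding infinite_nat_iff_unbounded_le by blast
    then show ?thesis
      using collatz_orbit_odd_denom_rats_backward[OF orbit, of k m] K \<open>s \<in> odd_denom_rats\<close>
      by simp
  qed
  have "b (n + (k2 - k1)) = b n" if "n \<ge> k1" for n
    using collatz_orbit_shift_eq_if_odd_denom_rats[OF orbit rats, of k1 k2 "n - k1"]
      K \<open>k1 \<in> K\<close> \<open>k2 \<in> K\<close> \<open>k1 < k2\<close> that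
    by (simp add: add.commute)
  moreover have "0 < k2 - k1"
    using \<open>k1 < k2\<close> by simp
  ultimately show ?thesis
    unfolding eventually_periodic_def by blast
qed

lemma Phi_exists_shift_word_if_frequently_dense:
  assumes c: "ln 2 / ln 3 < c" and dense: "\<And>N. \<exists>k\<ge>N. dense_prefixes c (shift_word k v)"
  shows "Phi_exists (shift_word k v)"
proof -
  obtain k0 where "dense_prefixes c (shift_word k0 v)"
    using dense by blast
  then have "infinite {n. shift_word k0 v n}"
    using infinite_ones_if_dense_prefixes[OF two_powr_inverse_lt_three(1)[OF c]] by blast
  then have ones: "infinite {n. v n}"
    by (simp add: finite_ones_shift_word_iff)
  obtain k' where "k \<le> k'" "dense_prefixes c (shift_word k' v)"
    using dense by blast
  then have "summable (Phi_term (shift_word k v))"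
    using Phi_R_bound_if_dense_prefixes(1)[OF c] summable_Phi_term_shift_word_le[OF ones] by blast
  then show ?thesis
    using ones by (simp add: Phi_exists_def finite_ones_shift_word_iff)
qed

lemma collatz_orbit_Phi_R_shift_word:
  assumes "\<And>k. Phi_exists (shift_word k v)"
  shows "collatz_orbit v (\<lambda>k. Phi_R (shift_word k v))"
  unfolding collatz_orbit_def
proof
  fix k
  have "infinite {n. shift_word k v n}" "summable (Phi_term (shift_word (Suc k) v))"
    using assms by (simp_all add: Phi_exists_def)
  then show "Phi_R (shift_word (Suc k) v) =
    (if v k then (3 * Phi_R (shift_word k v) + 1) / 2 else Phi_R (shift_word k v) / 2)"
    using Phi_R_shift_word_one[of "shift_word k v"]
    by (simp add: shift_word_shift_word) (simp add: shift_word_def)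
qed

lemma infinite_Phi_R_shift_word_image:
  assumes "\<not> eventually_periodic v" "\<And>k. Phi_exists (shift_word k v)" "infinite G"
  shows "infinite ((\<lambda>k. Phi_R (shift_word k v)) ` G)"
proof
  assume "finite ((\<lambda>k. Phi_R (shift_word k v)) ` G)"
  then obtain y where "infinite ((\<lambda>k. Phi_R (shift_word k v)) -` {y} \<inter> G)"
    using inf_img_fin_dom'[OF _ assms(3)] by blast
  then have "eventually_periodic v"
    using collatz_orbit_eventually_periodic[OF collatz_orbit_Phi_R_shift_word[OF assms(2)]] by blast
  then show False
    using assms(1) by blast
qed

theorem lemma26:
  fixes v :: "nat \<Rightarrow> bool"
  assumes "\<not> eventually_periodic v"
    and "liminf (\<lambda>l. ereal (real (ones_count v l) / real l)) > ereal (ln 2 / ln 3)"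
  shows "(\<forall>k. Phi_exists (shift_word k v))
         \<and> infinite {Phi_R (shift_word k v) | k. True}
         \<and> (\<exists>x::real. x islimpt {Phi_R (shift_word k v) | k. True})"
proof -
  obtain c where c: "ln 2 / ln 3 < c" and dense: "\<And>N. \<exists>k\<ge>N. dense_prefixes c (shift_word k v)"
    using ex_dense_prefixes_shift_word[OF assms(2)] by blast
  define G where "G = {k. dense_prefixes c (shift_word k v)}"
  define x where "x k = Phi_R (shift_word k v)" for k
  have exists: "Phi_exists (shift_word k v)" for k
    using Phi_exists_shift_word_if_frequently_dense[OF c dense] .
  have "infinite G"
    using dense unfolding G_def infinite_nat_iff_unbounded_le by blast
  then have infinite: "infinite (x ` G)"
    unfolding x_def by (rule infinite_Phi_R_shift_word_image[OF assms(1) exists])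
  have "bounded (x ` G)"
    using Phi_R_bound_if_dense_prefixes(2)[OF c]
    unfolding bounded_iff G_def x_def by (auto intro!: exI)
  then obtain z where "z islimpt x ` G"
    using bounded_infinite_imp_islimpt[OF order_refl _ infinite] by blast
  have "x ` G \<subseteq> range x"
    by blast
  then have "infinite (range x)" "z islimpt range x"
    using infinite_super[OF _ infinite] islimpt_subset[OF \<open>z islimpt x ` G\<close>] by auto
  moreover have "{Phi_R (shift_word k v) | k. True} = range x"
    by (auto simp: x_def)
  ultimately show ?thesis
    using exists by auto
qed

end
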